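(* Let $(M,\le)$ be a finite modular lattice and let $Q$ be a set of covering relations of $M$. Then $Q$ is the set of covering relations (of $M$) contained in some saturated transfer system on $M$ if and only if $Q$ is a saturated cover. Moreover, the assignments $Q\mapsto\langle Q\rangle$ and $R\mapsto R_{cov}$ are mutually inverse bijections between saturated covers on $M$ and saturated transfer systems on $M$, where $R_{cov}$ is the set of covering relations of $M$ lying in $R$.
   Context: A lattice $M$ is modular if $a\le b$ implies $a\vee(x\wedge b)=(a\vee x)\wedge b$ for all $a,b,x$. A transfer system on a finite lattice $(P,\le)$ is a partial order $R$ refining $\le$ closed under restriction: $x\,R\,z$ and $y\le z$ imply $(x\wedge y)\,R\,y$. It is saturated if $x\,R\,y$, $y\le z$ and $x\,R\,z$ imply $y\,R\,z$. For a set $Q$ of pairs $(x,y)$ with $x\le y$, $\langle Q\rangle$ is the intersection of all transfer systems containing $Q$. A covering diamond is a quadruple $x,y,x\wedge y,x\vee y$ with $x\ne y$ such that $x\vee y$ covers both $x$ and $y$ and both $x,y$ cover $x\wedge y$. A saturated cover on $M$ is a set $Q$ of covering relations of $M$ such that (1) for all $x,y\in M$, if $x\,Q\,(x\vee y)$ then $(x\wedge y)\,Q\,y$; and (2) for every covering diamond, if three of its four covering relations ($x\wedge y\lessdot x$, $x\wedge y\lessdot y$, $x\lessdot x\vee y$, $y\lessdot x\vee y$) lie in $Q$, then so does the fourth. *)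

theory Defs
  imports Main
begin

definition modular_lattice :: "'a::lattice itself \<Rightarrow> bool" where
  "modular_lattice _ \<longleftrightarrow>
     (\<forall>a b x :: 'a. a \<le> b \<longrightarrow> sup a (inf x b) = inf (sup a x) b)"

definition covers :: "'a::order \<Rightarrow> 'a \<Rightarrow> bool" where
  "covers x y \<longleftrightarrow> x < y \<and> \<not> (\<exists>z. x < z \<and> z < y)"

definition covering_relations :: "('a::order \<times> 'a) set" where
  "covering_relations = {(x, y). covers x y}"

definition transfer_system :: "('a::lattice \<times> 'a) set \<Rightarrow> bool" where
  "transfer_system R \<longleftrightarrow>
     R \<subseteq> {(x, y). x \<le> y} \<and> refl R \<and> antisym R \<and> trans R \<and>
     (\<forall>x y z. (x, z) \<in> R \<and> y \<le> z \<longrightarrow> (inf x y, y) \<in> R)"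

definition saturated :: "('a::lattice \<times> 'a) set \<Rightarrow> bool" where
  "saturated R \<longleftrightarrow>
     (\<forall>x y z. (x, y) \<in> R \<and> y \<le> z \<and> (x, z) \<in> R \<longrightarrow> (y, z) \<in> R)"

definition generated_ts :: "('a::lattice \<times> 'a) set \<Rightarrow> ('a \<times> 'a) set" where
  "generated_ts Q = \<Inter> {R. transfer_system R \<and> Q \<subseteq> R}"

definition covering_diamond :: "'a::lattice \<Rightarrow> 'a \<Rightarrow> bool" where
  "covering_diamond x y \<longleftrightarrow> x \<noteq> y \<and>
     covers x (sup x y) \<and> covers y (sup x y) \<and>
     covers (inf x y) x \<and> covers (inf x y) y"

definition saturated_cover :: "('a::lattice \<times> 'a) set \<Rightarrow> bool" where
  "saturated_cover Q \<longleftrightarrow>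
     Q \<subseteq> covering_relations \<and>
     (\<forall>x y. (x, sup x y) \<in> Q \<longrightarrow> (inf x y, y) \<in> Q) \<and>
     (\<forall>x y. covering_diamond x y \<longrightarrow>
        (let P = {(inf x y, x), (inf x y, y), (x, sup x y), (y, sup x y)}
         in card (P \<inter> Q) \<ge> 3 \<longrightarrow> P \<subseteq> Q))"

definition cov_part :: "('a::lattice \<times> 'a) set \<Rightarrow> ('a \<times> 'a) set" where
  "cov_part R = R \<inter> covering_relations"

end

theory Submission imports Defs begin

text \<open>
  A saturated transfer system R is the reflexive-transitive closure of its covering relations:
  saturation puts every covering relation of an interval [x, y] with (x, y) \<in> R into R.
  Conversely, for a saturated cover Q the restriction axiom (1) makes the reflexive-transitive
  closure Q* a transfer system, and Q* has no covering relations besides Q. The real content is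
  that Q* is saturated, which follows from the invariant that (x, z) \<in> Q* forces every covering
  relation of [x, z] into Q. It is propagated along a step x \<lessdot> w of Q: a covering relation
  u \<lessdot> v of [x, z] with w \<le> v but not w \<le> u is reached by induction on u through the covering
  diamond spanned by u and t \<squnion> w, where x \<le> t \<lessdot> u; the other covering relations of [x, z] are
  transposes of covering relations of [w, z] by modularity, and axiom (1) pulls them back.
\<close>

definition covers_in_interval :: "('a::order \<times> 'a) set \<Rightarrow> 'a \<Rightarrow> 'a \<Rightarrow> bool" where
  "covers_in_interval S x z \<longleftrightarrow> (\<forall>u v. x \<le> u \<and> covers u v \<and> v \<le> z \<longrightarrow> (u, v) \<in> S)"

lemma covers_imp_less: "covers x y \<Longrightarrow> x < y"
  by (simp add: covers_def)

lemma covers_eq_top: "covers a b \<Longrightarrow> a < c \<Longrightarrow> c \<le> b \<Longrightarrow> c = b"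
  unfolding covers_def using order_le_less by blast

lemma covers_eq_bot: "covers a b \<Longrightarrow> a \<le> c \<Longrightarrow> c < b \<Longrightarrow> c = a"
  unfolding covers_def using order_le_less by blast

lemma covers_in_interval_mono:
  "covers_in_interval S x z \<Longrightarrow> x \<le> x' \<Longrightarrow> z' \<le> z \<Longrightarrow> covers_in_interval S x' z'"
  unfolding covers_in_interval_def by (meson order_trans)

lemma covers_in_interval_refl: "covers_in_interval S x x"
  unfolding covers_in_interval_def covers_def by (auto dest: order.strict_trans2 order.strict_trans1)

lemma finite_order_less_induct:
  fixes x :: "'a::{finite,order}"
  assumes "\<And>x. (\<And>y. y < x \<Longrightarrow> P y) \<Longrightarrow> P x"
  shows "P x"
proof -
  have "wf {(y, x :: 'a). y < x}"
    by (rule wf_finite_segments) (auto simp: irrefl_def trans_def)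
  then show ?thesis
    by (induct x rule: wf_induct_rule) (use assms in blast)
qed

lemma exists_covers_below:
  fixes x u :: "'a::{finite,order}"
  assumes "x < u"
  shows "\<exists>t. x \<le> t \<and> covers t u"
proof -
  obtain t where t: "t \<in> {z. x \<le> z \<and> z < u}" "\<forall>s\<in>{z. x \<le> z \<and> z < u}. t \<le> s \<longrightarrow> t = s"
    using finite_has_maximal[of "{z. x \<le> z \<and> z < u}"] assms by auto
  then show ?thesis
    unfolding covers_def by (metis mem_Collect_eq order_le_less_trans order_less_le)
qed

lemma rtrancl_if_covers_in_interval:
  fixes x z :: "'a::{finite,order}"
  assumes "x \<le> z" and "covers_in_interval S x z"
  shows "(x, z) \<in> S\<^sup>*"
  using assms
proof (induction z rule: finite_order_less_induct)
  case (1 z)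
  show ?case
  proof (cases "x = z")
    case False
    then obtain t where t: "x \<le> t" "covers t z"
      using "1.prems"(1) exists_covers_below by (metis order_less_le)
    have "t < z" using t(2) by (rule covers_imp_less)
    then have "covers_in_interval S x t"
      using "1.prems"(2) covers_in_interval_mono by (blast intro: less_imp_le)
    then have "(x, t) \<in> S\<^sup>*" using "1.IH"[OF \<open>t < z\<close> t(1)] by blast
    moreover have "(t, z) \<in> S"
      using "1.prems"(2) t unfolding covers_in_interval_def by blast
    ultimately show ?thesis by simp
  qed simp
qed

lemma rtrancl_covers_le:
  assumes "S \<subseteq> covering_relations" and "(x, y) \<in> S\<^sup>*"
  shows "x \<le> (y::'a::order)"
  using assms(2)
proof (induction rule: rtrancl_induct)
  case (step y z)
  then have "covers y z" using assms(1) unfolding covering_relations_def by blast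
  with step.IH show ?case by (meson covers_imp_less less_imp_le order_trans)
qed simp

lemma inf_eq_if_covers:
  fixes x w a :: "'a::lattice"
  assumes "covers x w" "x \<le> a" "\<not> w \<le> a"
  shows "inf a w = x"
proof -
  have "x \<le> inf a w" using assms by (simp add: covers_def less_imp_le)
  moreover have "inf a w < w" using assms(3) by (metis inf.absorb_iff2 inf_le2 order_less_le)
  ultimately show ?thesis using covers_eq_bot[OF assms(1)] by blast
qed

lemma modular_latticeD:
  "modular_lattice TYPE('a::lattice) \<Longrightarrow> (a::'a) \<le> b \<Longrightarrow> sup a (inf x b) = inf (sup a x) b"
  unfolding modular_lattice_def by blast

lemma modular_covers_inf_if_covers_sup:
  fixes x y :: "'a::lattice"
  assumes m: "modular_lattice TYPE('a)" and c: "covers x (sup x y)"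
  shows "covers (inf x y) y"
proof -
  have "inf x y < y"
    using c by (metis covers_def inf.absorb_iff2 inf_le2 order_less_le sup_absorb1)
  moreover have "\<not> (inf x y < z \<and> z < y)" for z
  proof
    assume z: "inf x y < z \<and> z < y"
    have "x < sup x z"
      using z by (metis inf.absorb2 inf_le1 le_inf_iff less_le_not_le order_less_le sup.absorb_iff1 sup_ge1)
    moreover have "sup x z \<le> sup x y" using z by (simp add: le_supI2 less_imp_le)
    ultimately have xz: "sup x z = sup x y" using covers_eq_top[OF c] by blast
    have "z = sup z (inf x y)" using z by (simp add: sup_absorb1 less_imp_le)
    also have "\<dots> = inf (sup z x) y" using modular_latticeD[OF m less_imp_le[OF conjunct2[OF z]]] .
    also have "\<dots> = y" using xz by (metis sup.commute inf.absorb2 sup_ge2)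
    finally show False using z by simp
  qed
  ultimately show ?thesis unfolding covers_def by blast
qed

lemma modular_covers_sup_if_covers_inf:
  fixes a b :: "'a::lattice"
  assumes m: "modular_lattice TYPE('a)" and c: "covers (inf a b) b"
  shows "covers a (sup a b)"
proof -
  have "a < sup a b"
    using c by (metis covers_def inf_absorb2 order_less_le sup.absorb_iff1 sup_ge1)
  moreover have "\<not> (a < z \<and> z < sup a b)" for z
  proof
    assume z: "a < z \<and> z < sup a b"
    have "inf a b \<le> inf z b" using z by (meson inf_mono less_imp_le order_refl)
    moreover have "inf z b < b"
      using z by (metis inf.absorb_iff2 inf_le2 le_sup_iff less_le_not_le order_less_le)
    ultimately have zb: "inf z b = inf a b" using covers_eq_bot[OF c] by blast
    have "a = sup a (inf b z)" using zb by (simp add: inf.commute)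
    also have "\<dots> = inf (sup a b) z" using modular_latticeD[OF m less_imp_le[OF conjunct1[OF z]]] .
    also have "\<dots> = z" using z by (simp add: inf_absorb2 less_imp_le)
    finally show False using z by simp
  qed
  ultimately show ?thesis unfolding covers_def by blast
qed

lemma modular_covering_diamond:
  fixes t u s :: "'a::lattice"
  assumes m: "modular_lattice TYPE('a)" and tu: "covers t u" and ts: "covers t s" and "u \<noteq> s"
  shows "covering_diamond u s" and "inf u s = t"
proof -
  have "\<not> u \<le> s" using covers_eq_top[OF ts] covers_imp_less[OF tu] \<open>u \<noteq> s\<close> by blast
  then show "inf u s = t"
    using inf_eq_if_covers[OF tu] ts covers_imp_less by (metis inf.commute less_imp_le)
  then show "covering_diamond u s"
    unfolding covering_diamond_def using \<open>u \<noteq> s\<close> tu ts modular_covers_sup_if_covers_inf[OF m]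
    by (metis inf.commute sup.commute)
qed

lemma three_of_four_contains_pair:
  assumes "3 \<le> card ({p1, p2, p3, p4} \<inter> A)"
  shows "(p1 \<in> A \<and> p3 \<in> A) \<or> (p2 \<in> A \<and> p4 \<in> A)"
proof (rule ccontr)
  assume "\<not> ?thesis"
  then obtain c d where "{p1, p2, p3, p4} \<inter> A \<subseteq> {c, d}" by blast
  then have "card ({p1, p2, p3, p4} \<inter> A) \<le> card {c, d}" by (rule card_mono[rotated]) simp
  also have "\<dots> \<le> 2" by (simp add: card_insert_if)
  finally show False using assms by simp
qed

lemma transfer_system_le: "transfer_system R \<Longrightarrow> (x, y) \<in> R \<Longrightarrow> x \<le> y"
  unfolding transfer_system_def by blast

lemma transfer_system_restrict:
  "transfer_system R \<Longrightarrow> (x, z) \<in> R \<Longrightarrow> y \<le> z \<Longrightarrow> (inf x y, y) \<in> R"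
  unfolding transfer_system_def by blast

lemma transfer_system_trans: "transfer_system R \<Longrightarrow> (x, y) \<in> R \<Longrightarrow> (y, z) \<in> R \<Longrightarrow> (x, z) \<in> R"
  unfolding transfer_system_def trans_def by blast

lemma rtrancl_subset_transfer_system:
  assumes "transfer_system R" "S \<subseteq> R"
  shows "S\<^sup>* \<subseteq> R"
proof (rule subrelI)
  fix x y assume "(x, y) \<in> S\<^sup>*"
  then show "(x, y) \<in> R"
    by (induction rule: rtrancl_induct)
      (use assms in \<open>auto simp: transfer_system_def refl_on_def trans_def\<close>)
qed

lemma generated_ts_least: "transfer_system R \<Longrightarrow> S \<subseteq> R \<Longrightarrow> generated_ts S \<subseteq> R"
  unfolding generated_ts_def by blast

lemma rtrancl_subset_generated_ts: "S\<^sup>* \<subseteq> generated_ts S"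
  unfolding generated_ts_def using rtrancl_subset_transfer_system by blast

lemma saturated_transfer_system_covers_in_interval:
  assumes ts: "transfer_system R" and sat: "saturated R" and xy: "(x, y) \<in> R"
  shows "covers_in_interval (cov_part R) x y"
  unfolding covers_in_interval_def
proof (intro allI impI)
  fix u v assume h: "x \<le> u \<and> covers u v \<and> v \<le> y"
  then have "u \<le> v" by (blast dest: covers_imp_less intro: less_imp_le)
  with h have "x \<le> u" "u \<le> y" "x \<le> v" by auto
  then have "(x, u) \<in> R" "(x, v) \<in> R"
    using transfer_system_restrict[OF ts xy] h by (metis inf_absorb1)+
  with \<open>u \<le> v\<close> have "(u, v) \<in> R" using sat unfolding saturated_def by blast
  with h show "(u, v) \<in> cov_part R" unfolding cov_part_def covering_relations_def by simp
qed

lemma generated_ts_cov_part: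
  fixes R :: "('a::{finite,lattice} \<times> 'a) set"
  assumes ts: "transfer_system R" and sat: "saturated R"
  shows "generated_ts (cov_part R) = R"
proof
  show "generated_ts (cov_part R) \<subseteq> R"
    using generated_ts_least[OF ts] unfolding cov_part_def by blast
  have "(x, y) \<in> (cov_part R)\<^sup>*" if "(x, y) \<in> R" for x y
    using rtrancl_if_covers_in_interval transfer_system_le[OF ts that]
      saturated_transfer_system_covers_in_interval[OF ts sat that] by blast
  then have "R \<subseteq> (cov_part R)\<^sup>*" by auto
  then show "R \<subseteq> generated_ts (cov_part R)" using rtrancl_subset_generated_ts by blast
qed

lemma saturated_cover_cov_part:
  fixes R :: "('a::lattice \<times> 'a) set"
  assumes m: "modular_lattice TYPE('a)" and ts: "transfer_system R" and sat: "saturated R"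
  shows "saturated_cover (cov_part R)"
  unfolding saturated_cover_def
proof (intro conjI allI impI)
  show "cov_part R \<subseteq> covering_relations" unfolding cov_part_def by blast
next
  fix x y :: 'a assume "(x, sup x y) \<in> cov_part R"
  then have "covers x (sup x y)" "(x, sup x y) \<in> R"
    unfolding cov_part_def covering_relations_def by auto
  then show "(inf x y, y) \<in> cov_part R"
    using modular_covers_inf_if_covers_sup[OF m] transfer_system_restrict[OF ts]
    unfolding cov_part_def covering_relations_def by auto
next
  fix x y :: 'a assume d: "covering_diamond x y"
  define a b where "a = inf x y" and "b = sup x y"
  define P where "P = {(a, x), (a, y), (x, b), (y, b)}"
  have cv: "covers a x" "covers a y" "covers x b" "covers y b"
    using d unfolding covering_diamond_def a_def b_def by auto
  have P_cov: "P \<inter> cov_part R = P \<inter> R"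
    using cv unfolding P_def cov_part_def covering_relations_def by auto
  have "3 \<le> card (P \<inter> cov_part R) \<Longrightarrow> P \<subseteq> cov_part R"
  proof -
    assume "3 \<le> card (P \<inter> cov_part R)"
    then have "3 \<le> card ({(a, x), (a, y), (x, b), (y, b)} \<inter> R)"
      using P_cov unfolding P_def by simp
    then have "((a, x) \<in> R \<and> (x, b) \<in> R) \<or> ((a, y) \<in> R \<and> (y, b) \<in> R)"
      by (rule three_of_four_contains_pair)
    then have ab: "(a, b) \<in> R" using transfer_system_trans[OF ts] by blast
    have "a \<le> x" "a \<le> y" "x \<le> b" "y \<le> b" unfolding a_def b_def by simp_all
    then have "(a, x) \<in> R" "(a, y) \<in> R"
      using transfer_system_restrict[OF ts ab] by (metis inf_absorb1)+
    then have "(x, b) \<in> R" "(y, b) \<in> R"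
      using sat ab \<open>x \<le> b\<close> \<open>y \<le> b\<close> unfolding saturated_def by blast+
    with \<open>(a, x) \<in> R\<close> \<open>(a, y) \<in> R\<close> show "P \<subseteq> cov_part R"
      using P_cov unfolding P_def by blast
  qed
  then show "let P = {(inf x y, x), (inf x y, y), (x, sup x y), (y, sup x y)}
      in 3 \<le> card (P \<inter> cov_part R) \<longrightarrow> P \<subseteq> cov_part R"
    unfolding Let_def a_def b_def P_def by blast
qed

lemma saturated_coverD:
  assumes "saturated_cover Q"
  shows saturated_cover_subset: "Q \<subseteq> covering_relations"
    and saturated_cover_restrict: "(x, sup x y) \<in> Q \<Longrightarrow> (inf x y, y) \<in> Q"
    and saturated_cover_diamond: "covering_diamond x y \<Longrightarrow>
      3 \<le> card ({(inf x y, x), (inf x y, y), (x, sup x y), (y, sup x y)} \<inter> Q) \<Longrightarrow>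
      {(inf x y, x), (inf x y, y), (x, sup x y), (y, sup x y)} \<subseteq> Q"
  using assms unfolding saturated_cover_def Let_def by blast+

lemma restrict_covers_step:
  fixes Q :: "('a::lattice \<times> 'a) set"
  assumes qc: "Q \<subseteq> covering_relations"
    and restr: "\<And>x y. (x, sup x y) \<in> Q \<Longrightarrow> (inf x y, y) \<in> Q"
    and xw: "(x, w) \<in> Q" and yw: "y \<le> w"
  shows "(inf x y, y) \<in> Q\<^sup>*"
proof (cases "y \<le> x")
  case False
  have c: "covers x w" using xw qc unfolding covering_relations_def by auto
  have "x < sup x y" using False by (metis sup.absorb_iff1 sup_ge1 order_less_le)
  moreover have "sup x y \<le> w" using c yw by (simp add: covers_def less_imp_le)
  ultimately have "sup x y = w" using covers_eq_top[OF c] by blast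
  then have "(inf x y, y) \<in> Q" using restr xw by blast
  then show ?thesis by blast
qed (simp add: inf_absorb2)

lemma transfer_system_rtrancl_covers:
  fixes Q :: "('a::lattice \<times> 'a) set"
  assumes qc: "Q \<subseteq> covering_relations"
    and restr: "\<And>x y. (x, sup x y) \<in> Q \<Longrightarrow> (inf x y, y) \<in> Q"
  shows "transfer_system (Q\<^sup>*)"
proof -
  have "(inf x y, y) \<in> Q\<^sup>*" if "(x, z) \<in> Q\<^sup>*" "y \<le> z" for x y z
    using that
  proof (induction arbitrary: y rule: converse_rtrancl_induct)
    case (step x w)
    have "x \<le> w" using step.hyps(1) qc unfolding covering_relations_def covers_def by auto
    then have "inf x (inf w y) = inf x y" by (metis inf.absorb1 inf.assoc)
    moreover have "(inf x (inf w y), inf w y) \<in> Q\<^sup>*"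
      using restrict_covers_step[OF qc restr step.hyps(1)] by simp
    moreover have "(inf w y, y) \<in> Q\<^sup>*" using step.IH step.prems .
    ultimately show ?case by (metis rtrancl_trans)
  qed (simp add: inf_absorb2)
  moreover have "Q\<^sup>* \<subseteq> {(x, y). x \<le> y}" using rtrancl_covers_le[OF qc] by auto
  moreover have "antisym (Q\<^sup>*)"
    unfolding antisym_def using rtrancl_covers_le[OF qc] by (blast intro: order_antisym)
  ultimately show ?thesis
    unfolding transfer_system_def using refl_rtrancl trans_rtrancl by blast
qed

lemma generated_ts_eq_rtrancl:
  fixes Q :: "('a::lattice \<times> 'a) set"
  assumes "Q \<subseteq> covering_relations"
    and "\<And>x y. (x, sup x y) \<in> Q \<Longrightarrow> (inf x y, y) \<in> Q"
  shows "generated_ts Q = Q\<^sup>*"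
  by (rule equalityI[OF generated_ts_least[OF transfer_system_rtrancl_covers[OF assms]]
        rtrancl_subset_generated_ts]) auto

lemma cov_part_rtrancl_covers:
  fixes Q :: "('a::lattice \<times> 'a) set"
  assumes qc: "Q \<subseteq> covering_relations"
  shows "cov_part (Q\<^sup>*) = Q"
proof
  show "Q \<subseteq> cov_part (Q\<^sup>*)" using qc unfolding cov_part_def by auto
  show "cov_part (Q\<^sup>*) \<subseteq> Q"
  proof
    fix p assume "p \<in> cov_part (Q\<^sup>*)"
    then obtain x y where p: "p = (x, y)" "(x, y) \<in> Q\<^sup>*" "covers x y"
      unfolding cov_part_def covering_relations_def by auto
    then have "x \<noteq> y" by (auto simp: covers_def)
    then obtain w where w: "(x, w) \<in> Q" "(w, y) \<in> Q\<^sup>*" using p(2) by (metis converse_rtranclE)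
    have "x < w" using w(1) qc unfolding covering_relations_def by (auto dest: covers_imp_less)
    then have "w = y" using covers_eq_top[OF p(3)] rtrancl_covers_le[OF qc w(2)] by blast
    with w p show "p \<in> Q" by simp
  qed
qed

lemma covers_mem_if_transposed_in_interval:
  fixes Q :: "('a::lattice \<times> 'a) set"
  assumes m: "modular_lattice TYPE('a)"
    and restr: "\<And>x y. (x, sup x y) \<in> Q \<Longrightarrow> (inf x y, y) \<in> Q"
    and xw: "covers x w" and Q_wz: "covers_in_interval Q w z" and wz: "w \<le> z"
    and xu: "x \<le> u" and uv: "covers u v" and vz: "v \<le> z" and nwv: "\<not> w \<le> v"
  shows "(u, v) \<in> Q"
proof -
  define p where "p = sup u w"
  have "u \<le> v" using uv covers_imp_less by (metis less_imp_le)
  have "inf v w = x" using inf_eq_if_covers[OF xw order_trans[OF xu \<open>u \<le> v\<close>] nwv] .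
  then have pv: "inf p v = u"
    using modular_latticeD[OF m \<open>u \<le> v\<close>, of w] xu unfolding p_def by (simp add: inf.commute sup_absorb1)
  then have "covers p (sup p v)" using modular_covers_sup_if_covers_inf[OF m] uv by simp
  moreover have "w \<le> p" "sup p v \<le> z" unfolding p_def using \<open>u \<le> v\<close> vz wz by auto
  ultimately have "(p, sup p v) \<in> Q" using Q_wz unfolding covers_in_interval_def by blast
  then show ?thesis using restr pv by fastforce
qed

lemma covers_mem_by_diamonds:
  fixes Q :: "('a::{finite,lattice} \<times> 'a) set"
  assumes m: "modular_lattice TYPE('a)" and sc: "saturated_cover Q"
    and xw: "(x, w) \<in> Q" and Q_wz: "covers_in_interval Q w z" and wz: "w \<le> z"
  shows "x \<le> u \<Longrightarrow> \<not> w \<le> u \<Longrightarrow> covers u v \<Longrightarrow> w \<le> v \<Longrightarrow> v \<le> z \<Longrightarrow> (u, v) \<in> Q"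
proof (induction u arbitrary: v rule: finite_order_less_induct)
  case (1 u)
  have cxw: "covers x w" using xw saturated_cover_subset[OF sc] unfolding covering_relations_def by auto
  have "u < v" using "1.prems"(3) by (rule covers_imp_less)
  have "u < sup u w" using "1.prems"(2) by (metis sup_ge1 sup_ge2 order_less_le)
  moreover have "sup u w \<le> v" using "1.prems"(4) \<open>u < v\<close> by simp
  ultimately have v: "v = sup u w" using covers_eq_top[OF "1.prems"(3), of "sup u w"] by simp
  show ?case
  proof (cases "u = x")
    case True
    then show ?thesis using covers_eq_top[OF "1.prems"(3), of w] covers_imp_less[OF cxw] "1.prems"(4) xw
      by simp
  next
    case False
    then obtain t where t: "x \<le> t" "covers t u" using "1.prems"(1) exists_covers_below by (metis order_less_le)
    define s where "s = sup t w"
    have "t < u" using t(2) by (rule covers_imp_less)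
    have "\<not> w \<le> t" using "1.prems"(2) \<open>t < u\<close> by (meson order_trans less_imp_le)
    then have "inf t w = x" using inf_eq_if_covers[OF cxw t(1)] by simp
    then have ts: "covers t s" unfolding s_def using modular_covers_sup_if_covers_inf[OF m, of t w] cxw by simp
    have "w \<le> s" "s \<le> z" unfolding s_def using \<open>t < u\<close> \<open>u < v\<close> "1.prems"(5) wz by auto
    have "u \<noteq> s" "t \<noteq> s" using "1.prems"(2) \<open>w \<le> s\<close> ts by (auto simp: covers_def)
    have dia: "covering_diamond u s" and "inf u s = t"
      using modular_covering_diamond[OF m t(2) ts \<open>u \<noteq> s\<close>] by auto
    have "sup u s = v" using \<open>t < u\<close> unfolding v s_def by (simp add: sup.absorb1 sup_assoc[symmetric])
    let ?P = "{(inf u s, u), (inf u s, s), (u, sup u s), (s, sup u s)}"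
    have "(t, s) \<in> Q" using "1.IH"[OF \<open>t < u\<close> t(1) \<open>\<not> w \<le> t\<close> ts \<open>w \<le> s\<close> \<open>s \<le> z\<close>] .
    moreover have "(t, u) \<in> Q"
      using covers_mem_if_transposed_in_interval[OF m saturated_cover_restrict[OF sc] cxw Q_wz wz
          t(1) t(2)] "1.prems"(2,5) \<open>u < v\<close> by (meson less_imp_le order_trans)
    moreover have "(s, v) \<in> Q"
      using Q_wz dia \<open>w \<le> s\<close> "1.prems"(5) \<open>sup u s = v\<close>
      unfolding covers_in_interval_def covering_diamond_def by auto
    ultimately have "{(t, u), (t, s), (s, v)} \<subseteq> ?P \<inter> Q"
      using \<open>inf u s = t\<close> \<open>sup u s = v\<close> by auto
    moreover have "card {(t, u), (t, s), (s, v)} = 3" using \<open>u \<noteq> s\<close> \<open>t \<noteq> s\<close> by simp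
    ultimately have "3 \<le> card (?P \<inter> Q)" by (metis card_mono finite)
    then show ?thesis using saturated_cover_diamond[OF sc dia] \<open>sup u s = v\<close> by auto
  qed
qed

lemma covers_in_interval_step:
  fixes Q :: "('a::{finite,lattice} \<times> 'a) set"
  assumes m: "modular_lattice TYPE('a)" and sc: "saturated_cover Q"
    and xw: "(x, w) \<in> Q" and Q_wz: "covers_in_interval Q w z" and wz: "w \<le> z"
  shows "covers_in_interval Q x z"
  unfolding covers_in_interval_def
proof (intro allI impI)
  fix u v assume h: "x \<le> u \<and> covers u v \<and> v \<le> z"
  have cxw: "covers x w" using xw saturated_cover_subset[OF sc] unfolding covering_relations_def by auto
  consider "w \<le> u" | "\<not> w \<le> u" "w \<le> v" | "\<not> w \<le> v" by blast
  then show "(u, v) \<in> Q"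
  proof cases
    case 1 then show ?thesis using Q_wz h unfolding covers_in_interval_def by blast
  next
    case 2 then show ?thesis using covers_mem_by_diamonds[OF m sc xw Q_wz wz] h by blast
  next
    case 3 then show ?thesis
      using covers_mem_if_transposed_in_interval[OF m saturated_cover_restrict[OF sc] cxw Q_wz wz] h
      by blast
  qed
qed

lemma covers_in_interval_if_rtrancl:
  fixes Q :: "('a::{finite,lattice} \<times> 'a) set"
  assumes m: "modular_lattice TYPE('a)" and sc: "saturated_cover Q" and "(x, z) \<in> Q\<^sup>*"
  shows "covers_in_interval Q x z"
  using assms(3)
proof (induction rule: converse_rtrancl_induct)
  case (step x w)
  then show ?case
    using covers_in_interval_step[OF m sc] rtrancl_covers_le[OF saturated_cover_subset[OF sc]] by blast
qed (rule covers_in_interval_refl)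

lemma saturated_rtrancl_saturated_cover:
  fixes Q :: "('a::{finite,lattice} \<times> 'a) set"
  assumes m: "modular_lattice TYPE('a)" and sc: "saturated_cover Q"
  shows "saturated (Q\<^sup>*)"
  unfolding saturated_def
proof (intro allI impI)
  fix x y z assume h: "(x, y) \<in> Q\<^sup>* \<and> y \<le> z \<and> (x, z) \<in> Q\<^sup>*"
  have "x \<le> y" using rtrancl_covers_le[OF saturated_cover_subset[OF sc]] h by blast
  then have "covers_in_interval Q y z"
    using covers_in_interval_if_rtrancl[OF m sc] covers_in_interval_mono h by blast
  with h show "(y, z) \<in> Q\<^sup>*" using rtrancl_if_covers_in_interval by blast
qed

lemma saturated_transfer_system_generated_ts:
  fixes Q :: "('a::{finite,lattice} \<times> 'a) set"
  assumes m: "modular_lattice TYPE('a)" and sc: "saturated_cover Q"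
  shows "transfer_system (generated_ts Q)" "saturated (generated_ts Q)"
    and "cov_part (generated_ts Q) = Q"
proof -
  have qc: "Q \<subseteq> covering_relations" using saturated_cover_subset[OF sc] .
  have eq: "generated_ts Q = Q\<^sup>*"
    using generated_ts_eq_rtrancl[OF qc] saturated_cover_restrict[OF sc] by blast
  have "transfer_system (Q\<^sup>*)"
    using transfer_system_rtrancl_covers[OF qc] saturated_cover_restrict[OF sc] by blast
  then show "transfer_system (generated_ts Q)" "saturated (generated_ts Q)"
    "cov_part (generated_ts Q) = Q"
    unfolding eq using saturated_rtrancl_saturated_cover[OF m sc] cov_part_rtrancl_covers[OF qc]
    by blast+
qed

theorem theorem3p13:
  fixes Q :: "('a::{finite, lattice} \<times> 'a) set"
  assumes "modular_lattice TYPE('a)"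
    and "Q \<subseteq> covering_relations"
  shows "((\<exists>R. transfer_system R \<and> saturated R \<and> Q = cov_part R) \<longleftrightarrow> saturated_cover Q)
    \<and> bij_betw generated_ts {Q :: ('a \<times> 'a) set. saturated_cover Q}
                           {R. transfer_system R \<and> saturated R}
    \<and> bij_betw cov_part {R :: ('a \<times> 'a) set. transfer_system R \<and> saturated R}
                        {Q. saturated_cover Q}
    \<and> (\<forall>Q' :: ('a \<times> 'a) set. saturated_cover Q' \<longrightarrow> cov_part (generated_ts Q') = Q')
    \<and> (\<forall>R :: ('a \<times> 'a) set. transfer_system R \<and> saturated R \<longrightarrow> generated_ts (cov_part R) = R)"
proof -
  have from_cover: "transfer_system (generated_ts Q') \<and> saturated (generated_ts Q')
      \<and> cov_part (generated_ts Q') = Q'" if "saturated_cover Q'" for Q' :: "('a \<times> 'a) set"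
    using saturated_transfer_system_generated_ts[OF assms(1) that] by blast
  have from_ts: "saturated_cover (cov_part R) \<and> generated_ts (cov_part R) = R"
    if "transfer_system R" "saturated R" for R :: "('a \<times> 'a) set"
    using saturated_cover_cov_part[OF assms(1) that] generated_ts_cov_part[OF that] by blast
  have "bij_betw generated_ts {Q :: ('a \<times> 'a) set. saturated_cover Q} {R. transfer_system R \<and> saturated R}"
    by (rule bij_betw_byWitness[where f' = cov_part]; use from_cover from_ts in blast)
  moreover have "bij_betw cov_part {R :: ('a \<times> 'a) set. transfer_system R \<and> saturated R} {Q. saturated_cover Q}"
    by (rule bij_betw_byWitness[where f' = generated_ts]; use from_cover from_ts in blast)
  ultimately show ?thesis
    using from_cover from_ts by blast
qed

end
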